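(* Let $S$ be a finite set of discrete probability distributions. For $x\in(0,1]$ define $C_S(x)$ to be the smallest $y\in[0,1]$ with $\textsc{Rem-Mass}^{\textsc{advanced}}_S(y)\ge x$. Then $C_S$ is non-decreasing, and whenever, during the run of the greedy coupling algorithm on $S$, there is $x$ mass left to be coupled, the next state created by the greedy algorithm has mass at least $C_S(x)$.
   Context: Distributions are finite vectors $p(1)\ge\dots\ge p(n)\ge0$ summing to $1$. Greedy coupling algorithm: maintain the remaining masses of the states of each distribution in $S$. Repeatedly: let $r=\min_{p\in S}\max_j p(j)$; if $r=0$ stop; otherwise create a coupling state of mass $r$ and subtract $r$ from the largest remaining state of every distribution (ties broken arbitrarily). For $y\in[0,1]$, $$\textsc{Rem-Mass}^{\textsc{advanced}}_S(y)=\max_{p\in S}\sum_{j=1}^n\begin{cases}y & y\le p(j)/2,\\ p(j)/2 & p(j)/2<y<p(j),\\ p(j) & p(j)\le y.\end{cases}$$ *)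

theory Defs
  imports Main "HOL.Real"
begin

text \<open>A distribution p(1) \<ge> ... \<ge> p(n) \<ge> 0 summing to 1, as a list (p ! (j-1) = p(j)).\<close>
definition is_dist :: "real list \<Rightarrow> bool" where
  "is_dist p \<longleftrightarrow> sorted_wrt (\<ge>) p \<and> (\<forall>a\<in>set p. 0 \<le> a) \<and> sum_list p = 1"

definition rem_term :: "real \<Rightarrow> real \<Rightarrow> real" where
  "rem_term y a = (if y \<le> a / 2 then y else if y < a then a / 2 else a)"

definition rem_mass_adv :: "real list set \<Rightarrow> real \<Rightarrow> real" where
  "rem_mass_adv S y = Max ((\<lambda>p. \<Sum>j<length p. rem_term y (p ! j)) ` S)"

definition C_S :: "real list set \<Rightarrow> real \<Rightarrow> real" where
  "C_S S x = (LEAST y. y \<in> {0..1} \<and> rem_mass_adv S y \<ge> x)"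

text \<open>Greedy coupling algorithm. A state is (rem, c): rem p j is the remaining mass of
  state j (0-based) of distribution p, c is the total mass coupled so far.\<close>
type_synonym gstate = "(real list \<Rightarrow> nat \<Rightarrow> real) \<times> real"

definition init_state :: "gstate" where
  "init_state = ((\<lambda>p j. p ! j), 0)"

definition next_mass :: "real list set \<Rightarrow> (real list \<Rightarrow> nat \<Rightarrow> real) \<Rightarrow> real" where
  "next_mass S rem = Min ((\<lambda>p. Max ((\<lambda>j. rem p j) ` {..<length p})) ` S)"

definition greedy_step :: "real list set \<Rightarrow> gstate \<Rightarrow> gstate \<Rightarrow> bool" where
  "greedy_step S st st' \<longleftrightarrow>
     (let rem = fst st; c = snd st; r = next_mass S rem in
       r \<noteq> 0 \<and>
       (\<exists>J. (\<forall>p\<in>S. J p < length p \<and> (\<forall>j<length p. rem p j \<le> rem p (J p))) \<and>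
            st' = ((\<lambda>p. if p \<in> S then (rem p)(J p := rem p (J p) - r) else rem p), c + r)))"

definition greedy_reachable :: "real list set \<Rightarrow> gstate \<Rightarrow> bool" where
  "greedy_reachable S st \<longleftrightarrow> (greedy_step S)\<^sup>*\<^sup>* init_state st"

end

theory Submission
  imports Defs Complex_Main
begin

(* Every summand of Rem-Mass^advanced_S is piecewise linear in y and at its only jump, y = p(j),
   takes the larger value; so Rem-Mass^advanced_S is upper semicontinuous from the right and the
   set of y in [0,1] with Rem-Mass(y) >= x contains its infimum. Hence C_S(x) is attained, and
   C_S is monotone because these sets shrink as x grows.

   For the greedy algorithm, the coupled masses r never increase. Therefore every state of every
   distribution is either untouched or has already lost at least the current r. For a
   distribution attaining r = min_p max_j, every remaining mass is moreover at most r, and these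
   facts bound the remaining mass of state j by the j-th summand of Rem-Mass at y = r. Summing
   over j, the mass x still to be coupled is at most Rem-Mass(r), so C_S(x) <= r. *)

lemma rem_term_eq: "0 \<le> a \<Longrightarrow> rem_term y a = (if y < a then min y (a / 2) else a)"
  unfolding rem_term_def by auto

lemma rem_term_continuous_right:
  assumes "0 \<le> a"
  shows "((\<lambda>z. rem_term z a) \<longlongrightarrow> rem_term y a) (at_right y)"
proof (cases "y < a")
  case True
  have "eventually (\<lambda>z. z < a) (at_right y)"
    using True by (auto simp: eventually_at_right_field)
  then have "eventually (\<lambda>z. min z (a / 2) = rem_term z a) (at_right y)"
    by eventually_elim (simp add: rem_term_eq assms)
  moreover have "((\<lambda>z. min z (a / 2)) \<longlongrightarrow> rem_term y a) (at_right y)"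
    using True assms by (simp add: rem_term_eq) (intro tendsto_intros)
  ultimately show ?thesis
    by (rule Lim_transform_eventually[rotated])
next
  case False
  have "eventually (\<lambda>z. a = rem_term z a) (at_right y)"
    using eventually_at_right_less[of y] by eventually_elim (use False assms in \<open>simp add: rem_term_eq\<close>)
  moreover have "((\<lambda>z. a) \<longlongrightarrow> rem_term y a) (at_right y)"
    using False assms by (simp add: rem_term_eq)
  ultimately show ?thesis
    by (rule Lim_transform_eventually[rotated])
qed

lemma le_rem_term: "u \<le> a \<Longrightarrow> u \<le> r \<Longrightarrow> u = a \<or> u + r \<le> a \<Longrightarrow> u \<le> rem_term r a"
  unfolding rem_term_def by auto

lemma Inf_mem_if_right_closed:
  fixes T :: "real set"
  assumes "T \<noteq> {}" "bdd_below T"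
    and right_closed: "\<And>y. y \<notin> T \<Longrightarrow> eventually (\<lambda>z. z \<notin> T) (at_right y)"
  shows "Inf T \<in> T"
proof (rule ccontr)
  assume Inf_notin: "Inf T \<notin> T"
  then obtain b where "Inf T < b" and gap: "\<forall>z>Inf T. z < b \<longrightarrow> z \<notin> T"
    using right_closed by (auto simp: eventually_at_right_field)
  then obtain t where "t \<in> T" "t < b"
    using cInf_less_iff[OF assms(1,2)] by blast
  moreover have "Inf T < t"
    using \<open>t \<in> T\<close> Inf_notin cInf_lower[OF _ assms(2)] by (metis order.not_eq_order_implies_strict)
  ultimately show False
    using gap by blast
qed

lemma sum_fun_upd_diff:
  fixes f :: "'a \<Rightarrow> real"
  assumes "finite A" "k \<in> A"
  shows "sum (f(k := f k - d)) A = sum f A - d"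
proof -
  have "f(k := f k - d) = (\<lambda>j. f j - (if j = k then d else 0))"
    by auto
  then show ?thesis
    using assms by (simp add: sum_subtractf)
qed

lemma is_dist_nth:
  assumes "is_dist p" "j < length p"
  shows "0 \<le> p ! j" "p ! j \<le> 1"
  using assms member_le_sum_list[of "p ! j" p] unfolding is_dist_def by auto

lemma is_dist_sum_nth: "is_dist p \<Longrightarrow> (\<Sum>j<length p. p ! j) = 1"
  unfolding is_dist_def by (simp add: sum_list_sum_nth atLeast0LessThan)

definition rem_mass :: "real list \<Rightarrow> real \<Rightarrow> real" where
  "rem_mass p y = (\<Sum>j<length p. rem_term y (p ! j))"

lemma rem_mass_adv_eq: "rem_mass_adv S y = Max ((\<lambda>p. rem_mass p y) ` S)"
  unfolding rem_mass_adv_def rem_mass_def ..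

lemma rem_mass_continuous_right:
  "\<forall>a\<in>set p. 0 \<le> a \<Longrightarrow> ((\<lambda>z. rem_mass p z) \<longlongrightarrow> rem_mass p y) (at_right y)"
  unfolding rem_mass_def by (intro tendsto_sum rem_term_continuous_right) auto

lemma rem_mass_one:
  assumes "is_dist p"
  shows "rem_mass p 1 = 1"
proof -
  have "rem_term 1 (p ! j) = p ! j" if "j < length p" for j
    using is_dist_nth[OF assms that] by (simp add: rem_term_eq)
  then show ?thesis
    unfolding rem_mass_def using is_dist_sum_nth[OF assms] by simp
qed

definition max_remaining :: "(real list \<Rightarrow> nat \<Rightarrow> real) \<Rightarrow> real list \<Rightarrow> real" where
  "max_remaining rem p = Max (rem p ` {..<length p})"

lemma next_mass_eq: "next_mass S rem = Min (max_remaining rem ` S)"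
  unfolding next_mass_def max_remaining_def ..

lemma max_remaining_ge: "j < length p \<Longrightarrow> rem p j \<le> max_remaining rem p"
  unfolding max_remaining_def by (intro Max_ge) auto

lemma max_remaining_le_iff: "p \<noteq> [] \<Longrightarrow> max_remaining rem p \<le> b \<longleftrightarrow> (\<forall>j<length p. rem p j \<le> b)"
  unfolding max_remaining_def by (subst Max_le_iff) auto

lemma max_remaining_attained: "p \<noteq> [] \<Longrightarrow> \<exists>j<length p. max_remaining rem p = rem p j"
  unfolding max_remaining_def using Max_in[of "rem p ` {..<length p}"] by fastforce

fun greedy_inv :: "real list set \<Rightarrow> gstate \<Rightarrow> bool" where
  "greedy_inv S (rem, c) \<longleftrightarrow>
     (\<forall>p\<in>S. (\<forall>j<length p. 0 \<le> rem p j \<and> rem p j \<le> p ! j \<and>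
                          (rem p j = p ! j \<or> rem p j + next_mass S rem \<le> p ! j)) \<and>
            (\<Sum>j<length p. rem p j) = 1 - c)"

locale dist_family =
  fixes S :: "real list set"
  assumes finite: "finite S" and nonempty: "S \<noteq> {}" and is_dist: "\<And>p. p \<in> S \<Longrightarrow> is_dist p"
begin

lemma dist_nonempty: "p \<in> S \<Longrightarrow> p \<noteq> []"
  using is_dist unfolding is_dist_def by fastforce

lemma rem_mass_le_rem_mass_adv: "p \<in> S \<Longrightarrow> rem_mass p y \<le> rem_mass_adv S y"
  unfolding rem_mass_adv_eq using finite by simp

lemma one_le_rem_mass_adv: "1 \<le> rem_mass_adv S 1"
proof -
  obtain p where "p \<in> S"
    using nonempty by blast
  then show ?thesis
    using rem_mass_le_rem_mass_adv[of p 1] rem_mass_one[OF is_dist] by simp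
qed

lemma eventually_rem_mass_adv_less:
  assumes "rem_mass_adv S y < x"
  shows "eventually (\<lambda>z. rem_mass_adv S z < x) (at_right y)"
proof -
  have "\<forall>p\<in>S. eventually (\<lambda>z. rem_mass p z < x) (at_right y)"
  proof
    fix p assume p: "p \<in> S"
    have "\<forall>a\<in>set p. 0 \<le> a"
      using is_dist[OF p] by (simp add: is_dist_def)
    moreover have "rem_mass p y < x"
      using rem_mass_le_rem_mass_adv[OF p, of y] assms by linarith
    ultimately show "eventually (\<lambda>z. rem_mass p z < x) (at_right y)"
      by (rule order_tendstoD(2)[OF rem_mass_continuous_right])
  qed
  then show ?thesis
    using eventually_ball_finite[OF finite] by (simp add: rem_mass_adv_eq finite nonempty)
qed

definition superlevel :: "real \<Rightarrow> real set" where
  "superlevel x = {y \<in> {0..1}. x \<le> rem_mass_adv S y}"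

lemma bdd_below_superlevel: "bdd_below (superlevel x)"
  unfolding superlevel_def by (rule bdd_belowI[of _ 0]) auto

lemma Inf_superlevel_mem:
  assumes "superlevel x \<noteq> {}"
  shows "Inf (superlevel x) \<in> superlevel x"
proof (rule Inf_mem_if_right_closed[OF assms bdd_below_superlevel])
  fix y assume y: "y \<notin> superlevel x"
  consider "y < 0" | "1 \<le> y" | "rem_mass_adv S y < x"
    using y unfolding superlevel_def by force
  then show "eventually (\<lambda>z. z \<notin> superlevel x) (at_right y)"
  proof cases
    case 1
    then have "eventually (\<lambda>z. z < 0) (at_right y)"
      by (auto simp: eventually_at_right_field)
    then show ?thesis
      by eventually_elim (simp add: superlevel_def)
  next
    case 2
    show ?thesis
      using eventually_at_right_less[of y] by eventually_elim (use 2 in \<open>simp add: superlevel_def\<close>)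
  next
    case 3
    from eventually_rem_mass_adv_less[OF this] show ?thesis
      by (rule eventually_mono) (simp add: superlevel_def)
  qed
qed

lemma C_S_eq_Inf:
  assumes "superlevel x \<noteq> {}"
  shows "C_S S x = Inf (superlevel x)"
proof -
  have "C_S S x = (LEAST y. y \<in> superlevel x)"
    unfolding C_S_def superlevel_def by simp
  also have "\<dots> = Inf (superlevel x)"
    using Inf_superlevel_mem[OF assms] cInf_lower[OF _ bdd_below_superlevel]
    by (intro Least_equality) auto
  finally show ?thesis .
qed

lemma C_S_le:
  assumes "y \<in> {0..1}" "x \<le> rem_mass_adv S y"
  shows "C_S S x \<le> y"
proof -
  have "y \<in> superlevel x"
    using assms by (simp add: superlevel_def)
  then have "C_S S x = Inf (superlevel x)"
    using C_S_eq_Inf by blast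
  then show ?thesis
    using cInf_lower[OF \<open>y \<in> superlevel x\<close> bdd_below_superlevel] by simp
qed

lemma C_S_mem_superlevel:
  assumes "x \<le> 1"
  shows "C_S S x \<in> superlevel x"
proof -
  have "1 \<in> superlevel x"
    using assms one_le_rem_mass_adv by (simp add: superlevel_def)
  then have "superlevel x \<noteq> {}"
    by blast
  then show ?thesis
    using C_S_eq_Inf Inf_superlevel_mem by simp
qed

lemma mono_on_C_S: "mono_on {0<..1} (C_S S)"
proof (rule mono_onI)
  fix x x' :: real assume "x \<in> {0<..1}" "x' \<in> {0<..1}" "x \<le> x'"
  then show "C_S S x \<le> C_S S x'"
    using C_S_mem_superlevel[of x'] by (auto simp: superlevel_def intro: C_S_le)
qed

lemma next_mass_le: "p \<in> S \<Longrightarrow> next_mass S rem \<le> max_remaining rem p"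
  unfolding next_mass_eq using finite by simp

lemma next_mass_attained: "\<exists>p\<in>S. next_mass S rem = max_remaining rem p"
  unfolding next_mass_eq using Min_in[of "max_remaining rem ` S"] finite nonempty by fastforce

lemma next_mass_nonneg:
  assumes "\<forall>p\<in>S. \<forall>j<length p. 0 \<le> rem p j"
  shows "0 \<le> next_mass S rem"
proof -
  obtain p where "p \<in> S" "next_mass S rem = max_remaining rem p"
    using next_mass_attained by blast
  then show ?thesis
    using assms dist_nonempty max_remaining_ge[of 0 p rem] by fastforce
qed

lemma next_mass_mono:
  assumes "\<forall>p\<in>S. \<forall>j<length p. rem' p j \<le> rem p j"
  shows "next_mass S rem' \<le> next_mass S rem"
proof -
  obtain p where p: "p \<in> S" "next_mass S rem = max_remaining rem p"
    using next_mass_attained by blast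
  have "rem' p j \<le> max_remaining rem p" if "j < length p" for j
    using assms p(1) max_remaining_ge[OF that, of rem] that by fastforce
  then have "max_remaining rem' p \<le> max_remaining rem p"
    using dist_nonempty[OF p(1)] by (simp add: max_remaining_le_iff)
  then show ?thesis
    using next_mass_le[OF p(1), of rem'] p(2) by simp
qed

lemma greedy_inv_init: "greedy_inv S init_state"
  using is_dist is_dist_nth is_dist_sum_nth by (simp add: init_state_def)

lemma greedy_inv_step:
  assumes step: "greedy_step S (rem, c) st'" and inv: "greedy_inv S (rem, c)"
  shows "greedy_inv S st'"
proof -
  define r where "r = next_mass S rem"
  obtain J where J: "\<forall>p\<in>S. J p < length p \<and> (\<forall>j<length p. rem p j \<le> rem p (J p))"
    and st': "st' = ((\<lambda>p. if p \<in> S then (rem p)(J p := rem p (J p) - r) else rem p), c + r)"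
    using step unfolding greedy_step_def r_def Let_def fst_conv snd_conv by blast
  define rem' where "rem' = (\<lambda>p. if p \<in> S then (rem p)(J p := rem p (J p) - r) else rem p)"
  have r_nonneg: "0 \<le> r"
    using inv next_mass_nonneg unfolding r_def by simp
  have r_le_J: "r \<le> rem p (J p)" if "p \<in> S" for p
  proof -
    have "max_remaining rem p \<le> rem p (J p)"
      using J that dist_nonempty[OF that] by (simp add: max_remaining_le_iff)
    then show ?thesis
      using next_mass_le[OF that, of rem] unfolding r_def by linarith
  qed
  have "\<forall>p\<in>S. \<forall>j<length p. rem' p j \<le> rem p j"
    using r_nonneg by (simp add: rem'_def)
  then have r'_le: "next_mass S rem' \<le> r"
    unfolding r_def by (rule next_mass_mono)
  have "(\<Sum>j<length p. rem' p j) = 1 - (c + r)" if "p \<in> S" for p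
    using inv that J sum_fun_upd_diff[of "{..<length p}" "J p" "rem p" r] by (simp add: rem'_def)
  moreover have "0 \<le> rem' p j \<and> rem' p j \<le> p ! j \<and>
                  (rem' p j = p ! j \<or> rem' p j + next_mass S rem' \<le> p ! j)"
    if "p \<in> S" "j < length p" for p j
    using inv that r_le_J[OF that(1)] r_nonneg r'_le by (fastforce simp: rem'_def r_def)
  ultimately show ?thesis
    unfolding st' rem'_def[symmetric] by simp
qed

lemma greedy_inv_reachable: "greedy_reachable S st \<Longrightarrow> greedy_inv S st"
  unfolding greedy_reachable_def
proof (induction rule: rtranclp_induct)
  case base
  show ?case by (rule greedy_inv_init)
next
  case (step st st')
  then show ?case
    by (cases st) (auto intro: greedy_inv_step)
qed

lemma C_S_le_next_mass:
  assumes "greedy_reachable S (rem, c)"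
  shows "C_S S (1 - c) \<le> next_mass S rem"
proof -
  define r where "r = next_mass S rem"
  have inv: "greedy_inv S (rem, c)"
    using greedy_inv_reachable[OF assms] .
  obtain p where p: "p \<in> S" "r = max_remaining rem p"
    using next_mass_attained r_def by blast
  have rem_le_r: "rem p j \<le> r" if "j < length p" for j
    using p max_remaining_ge[OF that] by simp
  have "r \<in> {0..1}"
    using inv p max_remaining_attained[OF dist_nonempty[OF p(1)], of rem]
      next_mass_nonneg[of rem] is_dist_nth[OF is_dist[OF p(1)]]
    by (fastforce simp: r_def)
  moreover have "1 - c \<le> rem_mass_adv S r"
  proof -
    have "1 - c = (\<Sum>j<length p. rem p j)"
      using inv p by simp
    also have "\<dots> \<le> rem_mass p r"
      unfolding rem_mass_def using inv p rem_le_r r_def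
      by (intro sum_mono le_rem_term) auto
    also have "\<dots> \<le> rem_mass_adv S r"
      using rem_mass_le_rem_mass_adv[OF p(1)] .
    finally show ?thesis .
  qed
  ultimately show ?thesis
    unfolding r_def by (rule C_S_le)
qed

end

theorem lemma6:
  fixes S :: "real list set"
  assumes "finite S" and "S \<noteq> {}" and "\<forall>p\<in>S. is_dist p"
  shows "mono_on {0<..1} (C_S S) \<and>
         (\<forall>rem c x. greedy_reachable S (rem, c) \<longrightarrow> x = 1 - c \<longrightarrow> 0 < x \<longrightarrow>
              next_mass S rem \<ge> C_S S x)"
proof -
  interpret dist_family S
    using assms by unfold_locales auto
  show ?thesis
    using mono_on_C_S C_S_le_next_mass by blast
qed

end
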